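(* Let $\lambda,\delta\in\partial\mathbb D$, $a\in\mathbb D$, and $F=H+\overline G\in\mathcal F^a_{\lambda,\delta}$. If $F$ is locally one-to-one and sense-preserving on $\mathbb D$, then $F$ is a convex harmonic mapping, i.e. $F$ is univalent on $\mathbb D$ and $F(\mathbb D)$ is convex.
   Context: $\mathbb D$ is the open unit disk. $\mathcal H$ is the set of harmonic $f=h+\overline g$ on $\mathbb D$ ($h,g$ analytic) with $h(0)=g(0)=0$, $h'(0)=1$; $f$ is locally one-to-one and sense-preserving iff $|h'|>|g'|$ on $\mathbb D$. For $\lambda,\delta\in\partial\mathbb D$ and $a\in\mathbb D$, with $a'=|1+a|-1$ and $\gamma_a=\arg(1+\overline a)$, $\mathcal F^a_{\lambda,\delta}$ is the set of $F=H+\overline G\in\mathcal H$ with $H'(z)+\overline{\delta^2}e^{-2i\gamma_a}G'(z)=\frac{1+a'}{(1+\lambda\delta e^{i\gamma_a}z)(1+\overline\lambda\delta e^{i\gamma_a}z)}$ on $\mathbb D$. *)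

theory Defs
  imports "HOL-Complex_Analysis.Complex_Analysis"
begin

definition in_class_H :: "(complex \<Rightarrow> complex) \<Rightarrow> (complex \<Rightarrow> complex) \<Rightarrow> bool" where
  "in_class_H h g \<longleftrightarrow> h holomorphic_on ball 0 1 \<and> g holomorphic_on ball 0 1 \<and>
     h 0 = 0 \<and> g 0 = 0 \<and> deriv h 0 = 1"

definition harm :: "(complex \<Rightarrow> complex) \<Rightarrow> (complex \<Rightarrow> complex) \<Rightarrow> complex \<Rightarrow> complex" where
  "harm h g = (\<lambda>z. h z + cnj (g z))"

text \<open>Locally one-to-one and sense-preserving on the disk (Lewy/Jacobian criterion |h'| > |g'|).\<close>
definition locally_univalent_sense_preserving ::
    "(complex \<Rightarrow> complex) \<Rightarrow> (complex \<Rightarrow> complex) \<Rightarrow> bool" where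
  "locally_univalent_sense_preserving h g \<longleftrightarrow> (\<forall>z\<in>ball 0 1. norm (deriv g z) < norm (deriv h z))"

definition family_F :: "complex \<Rightarrow> complex \<Rightarrow> complex \<Rightarrow>
    (complex \<Rightarrow> complex) \<Rightarrow> (complex \<Rightarrow> complex) \<Rightarrow> bool" where
  "family_F a lam \<delta> H G \<longleftrightarrow> in_class_H H G \<and>
     (let a' = norm (1 + a) - 1; \<gamma> = Arg (1 + cnj a) in
      \<forall>z\<in>ball 0 1. deriv H z + cnj (\<delta>^2) * exp (- 2 * \<i> * of_real \<gamma>) * deriv G z =
        of_real (1 + a') /
          ((1 + lam * \<delta> * exp (\<i> * of_real \<gamma>) * z) * (1 + cnj lam * \<delta> * exp (\<i> * of_real \<gamma>) * z)))"

end

theory Submission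
  imports Defs
begin

text \<open>Write \<open>u = \<delta> e\<^sup>i\<^sup>\<gamma>\<close> and \<open>A = |1 + a|\<close>. After rotating the disk by \<open>u\<close> the defining equation reads
  \<open>h' + g' = A / ((1 + \<lambda> z) (1 + cnj \<lambda> z))\<close>, so \<open>\<phi> = h + g\<close> maps the disk conformally onto a
  half-plane (\<open>\<lambda> = \<plusminus>1\<close>) or a vertical strip \<open>\<Omega>\<close>; both are convex and invariant under vertical
  translations. Composed with \<open>E = \<phi>\<^sup>-\<^sup>1\<close>, the map \<open>F\<close> becomes the vertical shear
  \<open>w \<mapsto> Re w + i Im \<Psi>(w)\<close> of \<open>\<Omega>\<close> with \<open>\<Psi> = (h - g) \<circ> E\<close>, and
  \<open>Re \<Psi>' = Re ((h' - g') / (h' + g')) > 0\<close> because \<open>|g'| < |h'|\<close>.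

  Such a shear is injective since \<open>Im \<Psi>\<close> increases strictly along vertical lines. Its image is
  convex because on the vertical line over \<open>(1 - t) Re w\<^sub>1 + t Re w\<^sub>2\<close> the function \<open>Im \<Psi>\<close> attains the
  value \<open>(1 - t) Im \<Psi>(w\<^sub>1) + t Im \<Psi>(w\<^sub>2)\<close>: were it to stay below that value, a Harnack estimate for
  \<open>\<Psi>'\<close> along horizontal segments would bound \<open>Re \<Psi>'\<close> from below high up on the line, making
  \<open>Im \<Psi>\<close> unbounded there; symmetrically from above.\<close>

section \<open>Harnack estimates for holomorphic functions with positive real part\<close>

lemma norm_diff_less_norm_add_cnj:
  fixes a b :: complex
  assumes "0 < Re a" "0 < Re b"
  shows "norm (a - b) < norm (a + cnj b)"
proof -
  have "(norm (a - b))\<^sup>2 < (norm (a + cnj b))\<^sup>2"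
    unfolding cmod_power2 using assms by (simp add: power2_eq_square algebra_simps)
  then show ?thesis by (simp add: power_less_imp_less_base)
qed

text \<open>Schwarz's lemma for the Cayley transform of \<open>g\<close> centred at \<open>g p\<close>.\<close>
lemma Re_pos_Schwarz_bound:
  fixes g :: "complex \<Rightarrow> complex"
  assumes hol: "g holomorphic_on ball p r"
    and pos: "\<And>z. z \<in> ball p r \<Longrightarrow> 0 < Re (g z)"
    and \<zeta>: "\<zeta> \<in> ball p r"
  shows "norm (g \<zeta> - g p) \<le> norm (\<zeta> - p) / r * norm (g \<zeta> + cnj (g p))"
proof -
  have r: "0 < r" using \<zeta> by (metis ball_eq_empty empty_iff not_le)
  define f where "f z = (g (p + of_real r * z) - g p) / (g (p + of_real r * z) + cnj (g p))" for z
  have inball: "p + of_real r * z \<in> ball p r" if "norm z < 1" for z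
    using that r by (simp add: dist_norm norm_mult)
  have den: "g (p + of_real r * z) + cnj (g p) \<noteq> 0" if "norm z < 1" for z
  proof -
    have "0 < Re (g (p + of_real r * z) + cnj (g p))"
      using pos[OF inball[OF that]] pos[of p] r by simp
    then show ?thesis by force
  qed
  have "(\<lambda>z. g (p + of_real r * z)) holomorphic_on ball 0 1"
    by (rule holomorphic_on_compose_gen[unfolded o_def, OF _ hol])
       (use r in \<open>auto intro!: holomorphic_intros simp: dist_norm norm_mult\<close>)
  then have hol_f: "f holomorphic_on ball 0 1"
    unfolding f_def using den by (intro holomorphic_intros) auto
  have f_bound: "norm (f z) < 1" if "norm z < 1" for z
  proof -
    have "norm (g (p + of_real r * z) - g p) < norm (g (p + of_real r * z) + cnj (g p))"
      using pos[OF inball[OF that]] pos[of p] r by (intro norm_diff_less_norm_add_cnj) auto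
    then show ?thesis using den[OF that] by (simp add: f_def norm_divide divide_less_eq)
  qed
  define \<xi> where "\<xi> = (\<zeta> - p) / of_real r"
  have \<xi>: "norm \<xi> < 1"
    using \<zeta> r by (simp add: \<xi>_def norm_divide dist_norm norm_minus_commute)
  have \<zeta>_eq: "p + of_real r * \<xi> = \<zeta>" using r by (simp add: \<xi>_def)
  have "norm (f \<xi>) \<le> norm \<xi>"
    using Schwarz_Lemma(1)[OF hol_f _ f_bound] \<xi> by (simp add: f_def)
  also have "norm \<xi> = norm (\<zeta> - p) / r" using r by (simp add: \<xi>_def norm_divide)
  finally have "norm (g \<zeta> - g p) / norm (g \<zeta> + cnj (g p)) \<le> norm (\<zeta> - p) / r"
    by (simp add: f_def \<zeta>_eq norm_divide)
  moreover have "g \<zeta> + cnj (g p) \<noteq> 0" using den[OF \<xi>] unfolding \<zeta>_eq .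
  ultimately show ?thesis by (simp add: pos_divide_le_eq)
qed

lemma Re_pos_half_ball_bound:
  fixes g :: "complex \<Rightarrow> complex"
  assumes hol: "g holomorphic_on ball p r"
    and pos: "\<And>z. z \<in> ball p r \<Longrightarrow> 0 < Re (g z)"
    and r: "0 < r" and \<zeta>: "norm (\<zeta> - p) \<le> r / 2"
  shows "norm (g \<zeta> - g p) \<le> 2 * Re (g p)"
proof -
  have "\<zeta> \<in> ball p r" using \<zeta> r by (simp add: dist_norm norm_minus_commute)
  have gp: "0 < Re (g p)" using pos r by simp
  have "norm (g \<zeta> - g p) \<le> norm (\<zeta> - p) / r * norm (g \<zeta> + cnj (g p))"
    by (rule Re_pos_Schwarz_bound[OF hol pos \<open>\<zeta> \<in> ball p r\<close>])
  also have "\<dots> \<le> 1 / 2 * (norm (g \<zeta> - g p) + 2 * Re (g p))"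
  proof (rule mult_mono)
    have "g \<zeta> + cnj (g p) = (g \<zeta> - g p) + of_real (2 * Re (g p))"
      by (simp add: complex_eq_iff)
    then have "norm (g \<zeta> + cnj (g p)) \<le> norm (g \<zeta> - g p) + norm (of_real (2 * Re (g p)) :: complex)"
      by (metis norm_triangle_ineq)
    then show "norm (g \<zeta> + cnj (g p)) \<le> norm (g \<zeta> - g p) + 2 * Re (g p)"
      using gp by simp
  qed (use \<zeta> r gp in \<open>auto simp: divide_le_eq\<close>)
  finally show ?thesis by simp
qed

text \<open>Harnack's inequality along a horizontal segment, chaining \<open>n\<close> half-ball estimates.\<close>
lemma Re_pos_horizontal_chain_bound:
  fixes g :: "complex \<Rightarrow> complex"
  assumes hol: "g holomorphic_on \<Omega>" and pos: "\<And>z. z \<in> \<Omega> \<Longrightarrow> 0 < Re (g z)"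
    and r: "0 < r"
    and balls: "\<And>\<tau>. \<tau> \<in> closed_segment 0 d \<Longrightarrow> ball (p + of_real \<tau>) r \<subseteq> \<Omega>"
  shows "\<tau> \<in> closed_segment 0 d \<Longrightarrow> \<bar>\<tau>\<bar> \<le> real n * r / 2 \<Longrightarrow>
    norm (g (p + of_real \<tau>) - g p) \<le> (3 ^ n - 1) * Re (g p)"
proof (induction n arbitrary: \<tau>)
  case 0
  then show ?case by simp
next
  case (Suc n)
  define \<tau>' where "\<tau>' = real n / (real n + 1) * \<tau>"
  have "\<tau>' \<in> closed_segment 0 \<tau>"
    unfolding \<tau>'_def closed_segment_def by (intro CollectI exI[of _ "real n / (real n + 1)"]) auto
  then have \<tau>': "\<tau>' \<in> closed_segment 0 d"
    using Suc.prems(1) subset_closed_segment[of 0 \<tau> 0 d] by auto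
  have "\<bar>\<tau>'\<bar> = real n / (real n + 1) * \<bar>\<tau>\<bar>" by (simp add: \<tau>'_def abs_mult)
  also have "\<dots> \<le> real n / (real n + 1) * (real (Suc n) * r / 2)"
    using Suc.prems(2) by (intro mult_left_mono) auto
  also have "\<dots> = real n * r / 2" by (simp add: field_simps)
  finally have IH: "norm (g (p + of_real \<tau>') - g p) \<le> (3 ^ n - 1) * Re (g p)"
    by (rule Suc.IH[OF \<tau>'])
  define c where "c = p + of_real \<tau>'"
  have "\<bar>\<tau> - \<tau>'\<bar> = \<bar>\<tau>\<bar> / (real n + 1)" by (simp add: \<tau>'_def field_simps)
  also have "\<dots> \<le> r / 2" using Suc.prems(2) by (simp add: field_simps)
  finally have "norm (p + of_real \<tau> - c) \<le> r / 2"
    by (simp add: c_def flip: of_real_diff)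
  then have step: "norm (g (p + of_real \<tau>) - g c) \<le> 2 * Re (g c)"
    using balls[OF \<tau>'] hol pos r unfolding c_def
    by (intro Re_pos_half_ball_bound[where r = r]) (auto intro: holomorphic_on_subset)
  have "Re (g c) \<le> Re (g p) + norm (g c - g p)"
    using complex_Re_le_cmod[of "g c - g p"] by simp
  moreover have "norm (g (p + of_real \<tau>) - g p) \<le> norm (g (p + of_real \<tau>) - g c) + norm (g c - g p)"
    by (rule norm_diff_triangle_le) auto
  ultimately show ?case using step IH unfolding c_def by (simp add: algebra_simps)
qed

lemma Re_pos_Harnack_vertical_strip:
  fixes g :: "complex \<Rightarrow> complex" and a b :: real
  assumes \<Omega>: "open \<Omega>" and vert: "\<And>w s. w \<in> \<Omega> \<Longrightarrow> Complex (Re w) s \<in> \<Omega>"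
    and strip: "\<And>x. x \<in> closed_segment a b \<Longrightarrow> Complex x 0 \<in> \<Omega>"
    and hol: "g holomorphic_on \<Omega>" and pos: "\<And>z. z \<in> \<Omega> \<Longrightarrow> 0 < Re (g z)"
  obtains C where "0 \<le> C"
    and "\<And>x y s. x \<in> closed_segment a b \<Longrightarrow> y \<in> closed_segment a b \<Longrightarrow>
      norm (g (Complex y s) - g (Complex x s)) \<le> C * Re (g (Complex x s))"
proof -
  have "compact (of_real ` closed_segment a b :: complex set)"
    by (intro compact_continuous_image continuous_intros compact_segment)
  moreover have "of_real ` closed_segment a b \<subseteq> \<Omega>"
    using strip by (auto simp: complex_of_real_def)
  ultimately obtain r where r: "0 < r" and r\<Omega>: "(\<Union>z \<in> of_real ` closed_segment a b. ball z r) \<subseteq> \<Omega>"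
    using compact_subset_open_imp_ball_epsilon_subset[OF _ \<Omega>] by metis
  have balls: "ball (Complex x s) r \<subseteq> \<Omega>" if "x \<in> closed_segment a b" for x s
  proof
    fix z assume "z \<in> ball (Complex x s) r"
    then have "Complex (Re z) (Im z - s) \<in> ball (of_real x) r"
      by (simp add: dist_norm cmod_def)
    then have "Complex (Re z) (Im z - s) \<in> \<Omega>" using r\<Omega> that by blast
    from vert[OF this, of "Im z"] show "z \<in> \<Omega>" by simp
  qed
  obtain n :: nat where n: "\<bar>b - a\<bar> \<le> real n * r / 2"
  proof -
    obtain n :: nat where "2 * \<bar>b - a\<bar> / r \<le> real n" using real_arch_simple by blast
    then show ?thesis using r by (intro that[of n]) (simp add: field_simps)
  qed
  show ?thesis
  proof (rule that[of "3 ^ n - 1"])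
    fix x y s assume x: "x \<in> closed_segment a b" and y: "y \<in> closed_segment a b"
    have "ball (Complex x s + of_real \<tau>) r \<subseteq> \<Omega>" if "\<tau> \<in> closed_segment 0 (y - x)" for \<tau>
    proof -
      have "x + \<tau> \<in> closed_segment (x + 0) (x + (y - x))"
        using that by (simp only: closed_segment_translation_eq)
      then have "x + \<tau> \<in> closed_segment a b"
        using x y subset_closed_segment[of x y a b] by auto
      moreover have "Complex x s + of_real \<tau> = Complex (x + \<tau>) s" by (simp add: complex_eq_iff)
      ultimately show ?thesis using balls[of "x + \<tau>" s] by simp
    qed
    moreover have "\<bar>y - x\<bar> \<le> real n * r / 2"
      using x y n by (auto simp: closed_segment_eq_real_ivl split: if_splits abs_split)
    ultimately have "norm (g (Complex x s + of_real (y - x)) - g (Complex x s))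
        \<le> (3 ^ n - 1) * Re (g (Complex x s))"
      using hol pos r by (intro Re_pos_horizontal_chain_bound) auto
    moreover have "Complex x s + of_real (y - x) = Complex y s" by (simp add: complex_eq_iff)
    ultimately show "norm (g (Complex y s) - g (Complex x s)) \<le> (3 ^ n - 1) * Re (g (Complex x s))"
      by simp
  qed simp
qed

lemma Re_pos_deriv_Taylor_vertical_strip:
  fixes \<Psi> :: "complex \<Rightarrow> complex" and a b :: real
  assumes \<Omega>: "open \<Omega>" and vert: "\<And>w s. w \<in> \<Omega> \<Longrightarrow> Complex (Re w) s \<in> \<Omega>"
    and strip: "\<And>x. x \<in> closed_segment a b \<Longrightarrow> Complex x 0 \<in> \<Omega>"
    and hol: "\<Psi> holomorphic_on \<Omega>" and pos: "\<And>z. z \<in> \<Omega> \<Longrightarrow> 0 < Re (deriv \<Psi> z)"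
  obtains C where "0 \<le> C"
    and "\<And>x y s. x \<in> closed_segment a b \<Longrightarrow> y \<in> closed_segment a b \<Longrightarrow>
      norm (\<Psi> (Complex y s) - \<Psi> (Complex x s) - of_real (y - x) * deriv \<Psi> (Complex x s))
        \<le> C * Re (deriv \<Psi> (Complex x s))"
proof -
  obtain C where C: "0 \<le> C" and Harnack: "\<And>x y s. x \<in> closed_segment a b \<Longrightarrow> y \<in> closed_segment a b \<Longrightarrow>
      norm (deriv \<Psi> (Complex y s) - deriv \<Psi> (Complex x s)) \<le> C * Re (deriv \<Psi> (Complex x s))"
    using Re_pos_Harnack_vertical_strip[OF \<Omega> vert strip holomorphic_deriv[OF hol \<Omega>] pos] by metis
  show ?thesis
  proof (rule that[of "C * \<bar>b - a\<bar>"])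
    fix x y s assume x: "x \<in> closed_segment a b" and y: "y \<in> closed_segment a b"
    let ?p = "Complex x s" and ?S = "closed_segment (Complex x s) (Complex y s)"
    have on_S: "Re z \<in> closed_segment a b \<and> z = Complex (Re z) s" if "z \<in> ?S" for z
      using that x y subset_closed_segment[of x y a b] by (auto simp: closed_segment_same_Im complex_eq_iff)
    have S\<Omega>: "z \<in> \<Omega>" if "z \<in> ?S" for z
      using on_S[OF that] vert[OF strip, of "Re z" s] by (metis complex.sel(1))
    have "norm ((\<Psi> (Complex y s) - Complex y s * deriv \<Psi> ?p) - (\<Psi> ?p - ?p * deriv \<Psi> ?p))
        \<le> C * Re (deriv \<Psi> ?p) * norm (Complex y s - ?p)"
    proof (rule field_differentiable_bound[where f' = "\<lambda>z. deriv \<Psi> z - deriv \<Psi> ?p"])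
      fix z assume "z \<in> ?S"
      show "((\<lambda>z. \<Psi> z - z * deriv \<Psi> ?p) has_field_derivative deriv \<Psi> z - deriv \<Psi> ?p) (at z within ?S)"
        using holomorphic_derivI[OF hol \<Omega> S\<Omega>[OF \<open>z \<in> ?S\<close>]]
        by (auto intro!: derivative_eq_intros)
      show "norm (deriv \<Psi> z - deriv \<Psi> ?p) \<le> C * Re (deriv \<Psi> ?p)"
        using Harnack[OF x, of "Re z" s] on_S[OF \<open>z \<in> ?S\<close>] by metis
    qed auto
    also have "\<dots> \<le> C * Re (deriv \<Psi> ?p) * \<bar>b - a\<bar>"
      using x y C pos[OF S\<Omega>, of ?p]
      by (intro mult_left_mono) (auto simp: closed_segment_eq_real_ivl cmod_def split: if_splits)
    also have "(\<Psi> (Complex y s) - Complex y s * deriv \<Psi> ?p) - (\<Psi> ?p - ?p * deriv \<Psi> ?p)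
        = \<Psi> (Complex y s) - \<Psi> ?p - (Complex y s - ?p) * deriv \<Psi> ?p"
      by (simp add: algebra_simps)
    also have "Complex y s - ?p = of_real (y - x)" by (simp add: complex_eq_iff)
    finally show "norm (\<Psi> (Complex y s) - \<Psi> ?p - of_real (y - x) * deriv \<Psi> ?p)
        \<le> C * \<bar>b - a\<bar> * Re (deriv \<Psi> ?p)"
      by (simp add: algebra_simps)
  qed (use C in simp)
qed

lemma Re_pos_deriv_convex_combination_defect:
  fixes \<Psi> :: "complex \<Rightarrow> complex" and a b t :: real
  assumes \<Omega>: "open \<Omega>" and vert: "\<And>w s. w \<in> \<Omega> \<Longrightarrow> Complex (Re w) s \<in> \<Omega>"
    and strip: "\<And>x. x \<in> closed_segment a b \<Longrightarrow> Complex x 0 \<in> \<Omega>"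
    and hol: "\<Psi> holomorphic_on \<Omega>" and pos: "\<And>z. z \<in> \<Omega> \<Longrightarrow> 0 < Re (deriv \<Psi> z)"
    and t: "0 \<le> t" "t \<le> 1"
  obtains C where "0 < C"
    and "\<And>s. \<bar>(1 - t) * Im (\<Psi> (Complex a s)) + t * Im (\<Psi> (Complex b s))
        - Im (\<Psi> (Complex ((1 - t) * a + t * b) s))\<bar>
      \<le> C * Re (deriv \<Psi> (Complex ((1 - t) * a + t * b) s))"
proof -
  obtain C where C: "0 \<le> C" and Taylor: "\<And>x y s. x \<in> closed_segment a b \<Longrightarrow> y \<in> closed_segment a b \<Longrightarrow>
      norm (\<Psi> (Complex y s) - \<Psi> (Complex x s) - of_real (y - x) * deriv \<Psi> (Complex x s))
        \<le> C * Re (deriv \<Psi> (Complex x s))"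
    using Re_pos_deriv_Taylor_vertical_strip[OF \<Omega> vert strip hol pos] by metis
  define x where "x = (1 - t) * a + t * b"
  have x: "x \<in> closed_segment a b"
    using t unfolding x_def closed_segment_def by auto
  show ?thesis
  proof (rule that[of "C + 1"], unfold x_def[symmetric])
    fix s
    let ?p = "Complex x s" and ?g = "deriv \<Psi> (Complex x s)"
    define D where "D y = \<Psi> (Complex y s) - \<Psi> ?p - of_real (y - x) * ?g" for y
    let ?K = "of_real (1 - t) * \<Psi> (Complex a s) + of_real t * \<Psi> (Complex b s) - \<Psi> ?p"
    have "\<bar>(1 - t) * Im (\<Psi> (Complex a s)) + t * Im (\<Psi> (Complex b s)) - Im (\<Psi> ?p)\<bar> = \<bar>Im ?K\<bar>"
      by simp
    also have "\<dots> \<le> norm ?K" by (rule abs_Im_le_cmod)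
    also have "?K = of_real (1 - t) * D a + of_real t * D b"
      by (simp add: D_def x_def algebra_simps)
    also have "norm \<dots> \<le> (1 - t) * norm (D a) + t * norm (D b)"
      using norm_triangle_ineq[of "of_real (1 - t) * D a" "of_real t * D b"] t by (simp add: norm_mult del: of_real_diff)
    also have "\<dots> \<le> (1 - t) * (C * Re ?g) + t * (C * Re ?g)"
      using Taylor[OF x, of a s] Taylor[OF x, of b s] t unfolding D_def
      by (intro add_mono mult_left_mono) auto
    also have "\<dots> \<le> (C + 1) * Re ?g"
      using pos[OF vert[OF strip[OF x]], of s] by (simp add: algebra_simps)
    finally show "\<bar>(1 - t) * Im (\<Psi> (Complex a s)) + t * Im (\<Psi> (Complex b s)) - Im (\<Psi> ?p)\<bar>
        \<le> (C + 1) * Re ?g" .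
  qed (use C in simp)
qed

lemma unbounded_above_of_deriv_ge:
  fixes f f' :: "real \<Rightarrow> real"
  assumes deriv: "\<And>s. (f has_real_derivative f' s) (at s)"
    and ge: "\<And>s. s\<^sub>0 \<le> s \<Longrightarrow> \<epsilon> \<le> f' s" and \<epsilon>: "0 < \<epsilon>"
  obtains s where "c \<le> f s"
proof -
  define s\<^sub>1 where "s\<^sub>1 = s\<^sub>0 + \<bar>c - f s\<^sub>0\<bar> / \<epsilon> + 1"
  have "s\<^sub>0 < s\<^sub>1" using \<epsilon> by (simp add: s\<^sub>1_def add_nonneg_pos)
  then obtain \<xi> where \<xi>: "s\<^sub>0 < \<xi>" and "f s\<^sub>1 - f s\<^sub>0 = (s\<^sub>1 - s\<^sub>0) * f' \<xi>"
    using MVT2[of s\<^sub>0 s\<^sub>1 f f'] deriv by blast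
  moreover have "(s\<^sub>1 - s\<^sub>0) * \<epsilon> \<le> (s\<^sub>1 - s\<^sub>0) * f' \<xi>"
    using ge[of \<xi>] \<xi> \<open>s\<^sub>0 < s\<^sub>1\<close> by (intro mult_left_mono) auto
  moreover have "(s\<^sub>1 - s\<^sub>0) * \<epsilon> = \<bar>c - f s\<^sub>0\<bar> + \<epsilon>"
    using \<epsilon> by (simp add: s\<^sub>1_def field_simps)
  ultimately have "c \<le> f s\<^sub>1" using abs_ge_self[of "c - f s\<^sub>0"] \<epsilon> by (smt (verit))
  then show ?thesis by (rule that)
qed

section \<open>Vertical shears\<close>

definition vertical_shear :: "(complex \<Rightarrow> complex) \<Rightarrow> complex \<Rightarrow> complex" where
  "vertical_shear \<Psi> w = Complex (Re w) (Im (\<Psi> w))"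

locale shear_domain =
  fixes \<Omega> :: "complex set" and \<Psi> :: "complex \<Rightarrow> complex"
  assumes open_domain: "open \<Omega>" and convex_domain: "convex \<Omega>"
    and vertical_lines: "\<And>w s. w \<in> \<Omega> \<Longrightarrow> Complex (Re w) s \<in> \<Omega>"
    and holomorphic: "\<Psi> holomorphic_on \<Omega>"
    and Re_deriv_pos: "\<And>w. w \<in> \<Omega> \<Longrightarrow> 0 < Re (deriv \<Psi> w)"
begin

lemma Im_vertical_has_derivative:
  assumes "Complex x s\<^sub>0 \<in> \<Omega>"
  shows "((\<lambda>s. Im (\<Psi> (Complex x s))) has_real_derivative Re (deriv \<Psi> (Complex x s))) (at s)"
proof -
  have "((\<lambda>s. of_real x + \<i> * of_real s) has_vector_derivative \<i>) (at s)"
    by (auto intro!: derivative_eq_intros simp: has_vector_derivative_def scaleR_conv_of_real)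
  moreover have "(\<Psi> has_field_derivative deriv \<Psi> (Complex x s)) (at (of_real x + \<i> * of_real s))"
    using holomorphic_derivI[OF holomorphic open_domain vertical_lines[OF assms, of s]]
    by (simp add: Complex_eq)
  ultimately have "((\<lambda>s. \<Psi> (of_real x + \<i> * of_real s)) has_vector_derivative \<i> * deriv \<Psi> (Complex x s)) (at s)"
    using field_vector_diff_chain_at[of _ \<i> s \<Psi>] by (simp add: o_def)
  from has_field_derivative_Im[OF this] show ?thesis by (simp add: Complex_eq)
qed

lemma Im_vertical_strict_mono:
  assumes "Complex x s\<^sub>0 \<in> \<Omega>" and "s < s'"
  shows "Im (\<Psi> (Complex x s)) < Im (\<Psi> (Complex x s'))"
  using \<open>s < s'\<close>
proof (rule DERIV_pos_imp_increasing)
  show "\<exists>y. ((\<lambda>s. Im (\<Psi> (Complex x s))) has_real_derivative y) (at r) \<and> 0 < y" for r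
    using Im_vertical_has_derivative[OF assms(1)] Re_deriv_pos vertical_lines[OF assms(1)]
    by (metis complex.sel(1))
qed

lemma inj_on_vertical_shear: "inj_on (vertical_shear \<Psi>) \<Omega>"
proof (rule inj_onI)
  fix w w' assume w: "w \<in> \<Omega>" and "w' \<in> \<Omega>" and "vertical_shear \<Psi> w = vertical_shear \<Psi> w'"
  then have Re: "Re w' = Re w" and "Im (\<Psi> w) = Im (\<Psi> w')"
    by (auto simp: vertical_shear_def)
  then have "Im (\<Psi> (Complex (Re w) (Im w))) = Im (\<Psi> (Complex (Re w) (Im w')))"
    by (metis complex.collapse)
  then have "Im w = Im w'"
    using Im_vertical_strict_mono[of "Re w" "Im w"] w
    by (metis complex.collapse linorder_neqE_linordered_idom order_less_irrefl)
  then show "w = w'" using Re by (simp add: complex_eq_iff)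
qed

lemma vertical_strip_subset:
  assumes "w\<^sub>1 \<in> \<Omega>" "w\<^sub>2 \<in> \<Omega>" and "x \<in> closed_segment (Re w\<^sub>1) (Re w\<^sub>2)"
  shows "Complex x s \<in> \<Omega>"
proof -
  have "closed_segment (Re w\<^sub>1) (Re w\<^sub>2) = Re ` closed_segment w\<^sub>1 w\<^sub>2"
    by (rule closed_segment_linear_image[OF bounded_linear.linear[OF bounded_linear_Re]])
  then obtain z where "z \<in> closed_segment w\<^sub>1 w\<^sub>2" and "x = Re z" using assms(3) by auto
  moreover have "closed_segment w\<^sub>1 w\<^sub>2 \<subseteq> \<Omega>"
    using assms(1,2) convex_domain by (rule closed_segment_subset)
  ultimately show ?thesis using vertical_lines by blast
qed

lemma Im_vertical_gain:
  assumes "w \<in> \<Omega>"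
  obtains \<delta> where "0 < \<delta>" and "\<And>s. Im w + 1 \<le> s \<Longrightarrow> Im (\<Psi> w) + \<delta> \<le> Im (\<Psi> (Complex (Re w) s))"
proof -
  have w: "Complex (Re w) (Im w) \<in> \<Omega>" using assms by simp
  define \<delta> where "\<delta> = Im (\<Psi> (Complex (Re w) (Im w + 1))) - Im (\<Psi> w)"
  show ?thesis
  proof (rule that[of \<delta>])
    show "0 < \<delta>" using Im_vertical_strict_mono[OF w, of "Im w" "Im w + 1"] by (simp add: \<delta>_def)
    fix s assume "Im w + 1 \<le> s"
    then have "Im (\<Psi> (Complex (Re w) (Im w + 1))) \<le> Im (\<Psi> (Complex (Re w) s))"
      using Im_vertical_strict_mono[OF w, of "Im w + 1" s] by (cases "s = Im w + 1") auto
    then show "Im (\<Psi> w) + \<delta> \<le> Im (\<Psi> (Complex (Re w) s))" by (simp add: \<delta>_def)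
  qed
qed

lemma convex_combination_vertical_gain:
  assumes w\<^sub>1: "w\<^sub>1 \<in> \<Omega>" and w\<^sub>2: "w\<^sub>2 \<in> \<Omega>" and t: "0 \<le> t" "t \<le> 1"
  obtains \<delta> where "0 < \<delta>" and "\<And>s. max (Im w\<^sub>1) (Im w\<^sub>2) + 1 \<le> s \<Longrightarrow>
    (1 - t) * Im (\<Psi> w\<^sub>1) + t * Im (\<Psi> w\<^sub>2) + \<delta>
      \<le> (1 - t) * Im (\<Psi> (Complex (Re w\<^sub>1) s)) + t * Im (\<Psi> (Complex (Re w\<^sub>2) s))"
proof -
  obtain \<delta>\<^sub>1 where \<delta>\<^sub>1: "0 < \<delta>\<^sub>1" "\<And>s. Im w\<^sub>1 + 1 \<le> s \<Longrightarrow> Im (\<Psi> w\<^sub>1) + \<delta>\<^sub>1 \<le> Im (\<Psi> (Complex (Re w\<^sub>1) s))"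
    using Im_vertical_gain[OF w\<^sub>1] by metis
  obtain \<delta>\<^sub>2 where \<delta>\<^sub>2: "0 < \<delta>\<^sub>2" "\<And>s. Im w\<^sub>2 + 1 \<le> s \<Longrightarrow> Im (\<Psi> w\<^sub>2) + \<delta>\<^sub>2 \<le> Im (\<Psi> (Complex (Re w\<^sub>2) s))"
    using Im_vertical_gain[OF w\<^sub>2] by metis
  show ?thesis
  proof (rule that[of "min \<delta>\<^sub>1 \<delta>\<^sub>2"])
    show "0 < min \<delta>\<^sub>1 \<delta>\<^sub>2" using \<delta>\<^sub>1(1) \<delta>\<^sub>2(1) by simp
    fix s assume s: "max (Im w\<^sub>1) (Im w\<^sub>2) + 1 \<le> s"
    have "Im (\<Psi> w\<^sub>1) + min \<delta>\<^sub>1 \<delta>\<^sub>2 \<le> Im (\<Psi> (Complex (Re w\<^sub>1) s))"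
      using \<delta>\<^sub>1(2)[of s] s by linarith
    moreover have "Im (\<Psi> w\<^sub>2) + min \<delta>\<^sub>1 \<delta>\<^sub>2 \<le> Im (\<Psi> (Complex (Re w\<^sub>2) s))"
      using \<delta>\<^sub>2(2)[of s] s by linarith
    ultimately have "(1 - t) * (Im (\<Psi> w\<^sub>1) + min \<delta>\<^sub>1 \<delta>\<^sub>2) + t * (Im (\<Psi> w\<^sub>2) + min \<delta>\<^sub>1 \<delta>\<^sub>2)
        \<le> (1 - t) * Im (\<Psi> (Complex (Re w\<^sub>1) s)) + t * Im (\<Psi> (Complex (Re w\<^sub>2) s))"
      using t by (intro add_mono mult_left_mono) auto
    then show "(1 - t) * Im (\<Psi> w\<^sub>1) + t * Im (\<Psi> w\<^sub>2) + min \<delta>\<^sub>1 \<delta>\<^sub>2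
        \<le> (1 - t) * Im (\<Psi> (Complex (Re w\<^sub>1) s)) + t * Im (\<Psi> (Complex (Re w\<^sub>2) s))"
      by (simp add: algebra_simps)
  qed
qed

text \<open>If the vertical line stayed below the level \<open>c\<close>, the convex-combination defect estimate
  would bound \<open>Re \<Psi>'\<close> from below high up on the line, forcing \<open>Im \<Psi>\<close> beyond \<open>c\<close> after all.\<close>
lemma vertical_line_reaches_combination:
  assumes w\<^sub>1: "w\<^sub>1 \<in> \<Omega>" and w\<^sub>2: "w\<^sub>2 \<in> \<Omega>" and t: "0 \<le> t" "t \<le> 1"
  obtains s where "(1 - t) * Im (\<Psi> w\<^sub>1) + t * Im (\<Psi> w\<^sub>2)
    \<le> Im (\<Psi> (Complex ((1 - t) * Re w\<^sub>1 + t * Re w\<^sub>2) s))"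
proof -
  define x where "x = (1 - t) * Re w\<^sub>1 + t * Re w\<^sub>2"
  define c where "c = (1 - t) * Im (\<Psi> w\<^sub>1) + t * Im (\<Psi> w\<^sub>2)"
  obtain C where C: "0 < C" and defect: "\<And>s. \<bar>(1 - t) * Im (\<Psi> (Complex (Re w\<^sub>1) s))
      + t * Im (\<Psi> (Complex (Re w\<^sub>2) s)) - Im (\<Psi> (Complex x s))\<bar> \<le> C * Re (deriv \<Psi> (Complex x s))"
    using Re_pos_deriv_convex_combination_defect[OF open_domain vertical_lines
        vertical_strip_subset[OF w\<^sub>1 w\<^sub>2] holomorphic Re_deriv_pos t]
    unfolding x_def by metis
  obtain \<delta> where \<delta>: "0 < \<delta>" and gain: "\<And>s. max (Im w\<^sub>1) (Im w\<^sub>2) + 1 \<le> s \<Longrightarrow>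
      c + \<delta> \<le> (1 - t) * Im (\<Psi> (Complex (Re w\<^sub>1) s)) + t * Im (\<Psi> (Complex (Re w\<^sub>2) s))"
    using convex_combination_vertical_gain[OF w\<^sub>1 w\<^sub>2 t] unfolding c_def by metis
  have x: "Complex x 0 \<in> \<Omega>"
    using vertical_strip_subset[OF w\<^sub>1 w\<^sub>2] t by (auto simp: x_def closed_segment_def)
  show ?thesis
  proof (cases "\<exists>s. c \<le> Im (\<Psi> (Complex x s))")
    case True
    then show ?thesis using that unfolding x_def c_def by blast
  next
    case False
    have "\<delta> / C \<le> Re (deriv \<Psi> (Complex x s))" if "max (Im w\<^sub>1) (Im w\<^sub>2) + 1 \<le> s" for s
    proof -
      have "Im (\<Psi> (Complex x s)) < c" using False not_le by blast
      then have "\<delta> \<le> C * Re (deriv \<Psi> (Complex x s))"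
        using gain[OF that] defect[of s] by (simp add: abs_le_iff)
      then show ?thesis using C by (simp add: divide_le_eq mult.commute)
    qed
    then obtain s where "c \<le> Im (\<Psi> (Complex x s))"
      using unbounded_above_of_deriv_ge[OF Im_vertical_has_derivative[OF x]] \<delta> C
      by (metis divide_pos_pos)
    then show ?thesis using False by blast
  qed
qed

lemma shear_domain_reflection: "shear_domain (uminus ` \<Omega>) (\<lambda>w. - \<Psi> (- w))"
proof
  have mem: "w \<in> uminus ` \<Omega> \<longleftrightarrow> - w \<in> \<Omega>" for w by force
  have der: "((\<lambda>w. - \<Psi> (- w)) has_field_derivative deriv \<Psi> (- w)) (at w)" if "w \<in> uminus ` \<Omega>" for w
  proof -
    have "(\<Psi> has_field_derivative deriv \<Psi> (- w)) (at (- w))"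
      using holomorphic_derivI[OF holomorphic open_domain, of "- w"] that mem by simp
    then have "((\<lambda>w. \<Psi> (- w)) has_field_derivative deriv \<Psi> (- w) * (- 1)) (at w)"
      by (rule DERIV_chain2) (auto intro!: derivative_eq_intros)
    from DERIV_minus[OF this] show ?thesis by simp
  qed
  show "open (uminus ` \<Omega>)" by (rule open_negations[OF open_domain])
  show "convex (uminus ` \<Omega>)" by (rule convex_negations[OF convex_domain])
  show "Complex (Re w) s \<in> uminus ` \<Omega>" if "w \<in> uminus ` \<Omega>" for w s
  proof -
    have "- Complex (Re w) s = Complex (Re (- w)) (- s)" by (simp add: complex_eq_iff)
    then show ?thesis using vertical_lines[of "- w" "- s"] that mem by metis
  qed
  show "(\<lambda>w. - \<Psi> (- w)) holomorphic_on uminus ` \<Omega>"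
    using der holomorphic_on_open[OF open_negations[OF open_domain]] by blast
  show "0 < Re (deriv (\<lambda>w. - \<Psi> (- w)) w)" if "w \<in> uminus ` \<Omega>" for w
    using DERIV_imp_deriv[OF der[OF that]] Re_deriv_pos that mem by simp
qed

lemma vertical_line_meets_combination_from_below:
  assumes w\<^sub>1: "w\<^sub>1 \<in> \<Omega>" and w\<^sub>2: "w\<^sub>2 \<in> \<Omega>" and t: "0 \<le> t" "t \<le> 1"
  obtains s where "Im (\<Psi> (Complex ((1 - t) * Re w\<^sub>1 + t * Re w\<^sub>2) s))
    \<le> (1 - t) * Im (\<Psi> w\<^sub>1) + t * Im (\<Psi> w\<^sub>2)"
proof -
  interpret reflected: shear_domain "uminus ` \<Omega>" "\<lambda>w. - \<Psi> (- w)" by (rule shear_domain_reflection)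
  obtain s where "(1 - t) * Im (- \<Psi> w\<^sub>1) + t * Im (- \<Psi> w\<^sub>2)
      \<le> Im (- \<Psi> (- Complex ((1 - t) * Re (- w\<^sub>1) + t * Re (- w\<^sub>2)) s))"
    using reflected.vertical_line_reaches_combination[of "- w\<^sub>1" "- w\<^sub>2" t] w\<^sub>1 w\<^sub>2 t by auto
  moreover have "- Complex ((1 - t) * Re (- w\<^sub>1) + t * Re (- w\<^sub>2)) s
      = Complex ((1 - t) * Re w\<^sub>1 + t * Re w\<^sub>2) (- s)"
    by (simp add: complex_eq_iff)
  ultimately show ?thesis using that[of "- s"] by simp
qed

lemma convex_vertical_shear_image: "convex (vertical_shear \<Psi> ` \<Omega>)"
proof (unfold convex_alt, intro ballI allI impI)
  fix z\<^sub>1 z\<^sub>2 and t :: real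
  assume "z\<^sub>1 \<in> vertical_shear \<Psi> ` \<Omega>" "z\<^sub>2 \<in> vertical_shear \<Psi> ` \<Omega>" and t: "0 \<le> t \<and> t \<le> 1"
  then obtain w\<^sub>1 w\<^sub>2 where w\<^sub>1: "w\<^sub>1 \<in> \<Omega>" "z\<^sub>1 = vertical_shear \<Psi> w\<^sub>1"
    and w\<^sub>2: "w\<^sub>2 \<in> \<Omega>" "z\<^sub>2 = vertical_shear \<Psi> w\<^sub>2" by blast
  define x where "x = (1 - t) * Re w\<^sub>1 + t * Re w\<^sub>2"
  define c where "c = (1 - t) * Im (\<Psi> w\<^sub>1) + t * Im (\<Psi> w\<^sub>2)"
  define v where "v s = Im (\<Psi> (Complex x s))" for s
  have x: "Complex x 0 \<in> \<Omega>"
    using vertical_strip_subset[OF w\<^sub>1(1) w\<^sub>2(1)] t by (auto simp: x_def closed_segment_def)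
  obtain s\<^sub>h\<^sub>i where hi: "c \<le> v s\<^sub>h\<^sub>i"
    using vertical_line_reaches_combination[OF w\<^sub>1(1) w\<^sub>2(1)] t unfolding v_def x_def c_def by blast
  obtain s\<^sub>l\<^sub>o where lo: "v s\<^sub>l\<^sub>o \<le> c"
    using vertical_line_meets_combination_from_below[OF w\<^sub>1(1) w\<^sub>2(1)] t unfolding v_def x_def c_def by blast
  have "s\<^sub>l\<^sub>o \<le> s\<^sub>h\<^sub>i"
    using Im_vertical_strict_mono[OF x, of s\<^sub>h\<^sub>i s\<^sub>l\<^sub>o] hi lo unfolding v_def by fastforce
  moreover have "continuous_on {s\<^sub>l\<^sub>o..s\<^sub>h\<^sub>i} v"
    using DERIV_isCont[OF Im_vertical_has_derivative[OF x]]
    unfolding v_def by (intro continuous_at_imp_continuous_on) auto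
  ultimately obtain s where "v s = c" using IVT'[of v s\<^sub>l\<^sub>o c s\<^sub>h\<^sub>i] hi lo by blast
  then have "(1 - t) *\<^sub>R z\<^sub>1 + t *\<^sub>R z\<^sub>2 = vertical_shear \<Psi> (Complex x s)"
    unfolding w\<^sub>1(2) w\<^sub>2(2) by (simp add: vertical_shear_def complex_eq_iff x_def c_def v_def)
  then show "(1 - t) *\<^sub>R z\<^sub>1 + t *\<^sub>R z\<^sub>2 \<in> vertical_shear \<Psi> ` \<Omega>"
    using vertical_lines[OF x, of s] by simp
qed

end

section \<open>Harmonic maps as sheared conformal maps\<close>

lemma Re_diff_div_add_pos:
  fixes a b :: complex
  assumes "norm b < norm a"
  shows "0 < Re ((a - b) / (a + b))"
proof -
  have "a + b \<noteq> 0" using assms by (metis add_eq_0_iff less_irrefl norm_minus_cancel)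
  then have "cnj (a + b) \<noteq> 0" by (simp del: complex_cnj_add)
  have "(a - b) / (a + b) = (a - b) * cnj (a + b) / ((a + b) * cnj (a + b))"
    using \<open>cnj (a + b) \<noteq> 0\<close> by simp
  also have "(a + b) * cnj (a + b) = of_real ((norm (a + b))\<^sup>2)"
    by (rule complex_norm_square[symmetric])
  finally have "Re ((a - b) / (a + b)) = Re ((a - b) * cnj (a + b)) / (norm (a + b))\<^sup>2"
    by (simp only: Re_divide_of_real)
  also have "Re ((a - b) * cnj (a + b)) = (norm a)\<^sup>2 - (norm b)\<^sup>2"
    unfolding cmod_power2 by (simp add: algebra_simps power2_eq_square)
  finally show ?thesis
    using assms \<open>a + b \<noteq> 0\<close> by (simp add: power_strict_mono)
qed

lemma inj_on_convex_image_transfer: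
  fixes f T E :: "complex \<Rightarrow> complex" and c :: complex
  assumes comm: "\<And>w. w \<in> \<Omega> \<Longrightarrow> f (E w) = c * T w" and onto: "E ` \<Omega> = B" and "c \<noteq> 0"
    and "inj_on T \<Omega>" and "convex (T ` \<Omega>)"
  shows "inj_on f B \<and> convex (f ` B)"
proof
  show "inj_on f B"
  proof (rule inj_onI)
    fix z z' assume "z \<in> B" "z' \<in> B" "f z = f z'"
    then obtain w w' where "w \<in> \<Omega>" "w' \<in> \<Omega>" "z = E w" "z' = E w'" using onto by blast
    then show "z = z'" using comm \<open>f z = f z'\<close> \<open>c \<noteq> 0\<close> \<open>inj_on T \<Omega>\<close> by (auto dest: inj_onD)
  qed
  have img: "f ` B = (\<lambda>y. c * y) ` T ` \<Omega>"
    unfolding onto[symmetric] image_image using comm by (simp cong: image_cong)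
  show "convex (f ` B)"
    unfolding img
    by (rule convex_linear_image[OF bounded_linear.linear[OF bounded_linear_mult_right] \<open>convex (T ` \<Omega>)\<close>])
qed

lemma left_inverse_of_deriv_inverse:
  assumes "convex \<Omega>" and E: "\<And>w. w \<in> \<Omega> \<Longrightarrow> (E has_field_derivative E' w) (at w)"
    and EU: "\<And>w. w \<in> \<Omega> \<Longrightarrow> E w \<in> U"
    and \<phi>: "\<And>z. z \<in> U \<Longrightarrow> (\<phi> has_field_derivative \<phi>' z) (at z)"
    and inv: "\<And>w. w \<in> \<Omega> \<Longrightarrow> \<phi>' (E w) * E' w = 1"
    and w\<^sub>0: "w\<^sub>0 \<in> \<Omega>" "\<phi> (E w\<^sub>0) = w\<^sub>0" and w: "w \<in> \<Omega>"
  shows "\<phi> (E w) = w"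
proof -
  have "\<exists>c. \<forall>w\<in>\<Omega>. \<phi> (E w) - w = c"
  proof (rule has_field_derivative_zero_constant[OF \<open>convex \<Omega>\<close>])
    fix w assume "w \<in> \<Omega>"
    have "((\<lambda>w. \<phi> (E w) - w) has_field_derivative \<phi>' (E w) * E' w - 1) (at w)"
      using DERIV_chain2[OF \<phi>[OF EU] E, OF \<open>w \<in> \<Omega>\<close> \<open>w \<in> \<Omega>\<close>] by (auto intro!: derivative_eq_intros)
    then show "((\<lambda>w. \<phi> (E w) - w) has_field_derivative 0) (at w within \<Omega>)"
      using inv[OF \<open>w \<in> \<Omega>\<close>] by (simp add: has_field_derivative_at_within)
  qed
  then obtain c where c: "\<And>w. w \<in> \<Omega> \<Longrightarrow> \<phi> (E w) - w = c" by blast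
  show ?thesis using c[OF w\<^sub>0(1)] c[OF w] w\<^sub>0(2) by simp
qed

text \<open>The hypotheses make \<open>E\<close> the inverse of \<open>H + G\<close> on \<open>\<Omega>\<close>, and then \<open>harm H G \<circ> E\<close> is the
  vertical shear of \<open>\<Omega>\<close> by \<open>(H - G) \<circ> E\<close>.\<close>
lemma univalent_convex_harm_via_shear:
  fixes H G E E' :: "complex \<Rightarrow> complex" and \<Omega> :: "complex set"
  assumes holH: "H holomorphic_on ball 0 1" and holG: "G holomorphic_on ball 0 1"
    and H0: "H 0 = 0" and G0: "G 0 = 0"
    and sp: "\<And>z. z \<in> ball 0 1 \<Longrightarrow> norm (deriv G z) < norm (deriv H z)"
    and \<Omega>: "open \<Omega>" "convex \<Omega>" "\<And>w s. w \<in> \<Omega> \<Longrightarrow> Complex (Re w) s \<in> \<Omega>" "0 \<in> \<Omega>"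
    and E: "\<And>w. w \<in> \<Omega> \<Longrightarrow> (E has_field_derivative E' w) (at w)"
    and onto: "E ` \<Omega> = ball 0 1" and E0: "E 0 = 0"
    and inv: "\<And>w. w \<in> \<Omega> \<Longrightarrow> E' w * (deriv H (E w) + deriv G (E w)) = 1"
  shows "inj_on (harm H G) (ball 0 1) \<and> convex (harm H G ` ball 0 1)"
proof -
  define \<Psi> where "\<Psi> w = H (E w) - G (E w)" for w
  have EB: "E w \<in> ball 0 1" if "w \<in> \<Omega>" for w using onto that by blast
  have dH: "(H has_field_derivative deriv H z) (at z)" if "z \<in> ball 0 1" for z
    using holomorphic_derivI[OF holH _ that] by simp
  have dG: "(G has_field_derivative deriv G z) (at z)" if "z \<in> ball 0 1" for z
    using holomorphic_derivI[OF holG _ that] by simp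
  have HG_E: "H (E w) + G (E w) = w" if "w \<in> \<Omega>" for w
  proof (rule left_inverse_of_deriv_inverse[OF \<Omega>(2) E EB _ _ \<Omega>(4) _ that])
    show "((\<lambda>z. H z + G z) has_field_derivative deriv H z + deriv G z) (at z)" if "z \<in> ball 0 1" for z
      using dH[OF that] dG[OF that] by (rule DERIV_add)
    show "(deriv H (E w) + deriv G (E w)) * E' w = 1" if "w \<in> \<Omega>" for w
      using inv[OF that] by (simp add: mult.commute)
    show "H (E 0) + G (E 0) = 0" by (simp add: E0 H0 G0)
  qed
  have d\<Psi>: "(\<Psi> has_field_derivative (deriv H (E w) - deriv G (E w)) * E' w) (at w)" if "w \<in> \<Omega>" for w
    unfolding \<Psi>_def left_diff_distrib
    by (intro DERIV_diff DERIV_chain2[OF dH] DERIV_chain2[OF dG] EB E that)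
  interpret shear_domain \<Omega> \<Psi>
  proof
    show "\<Psi> holomorphic_on \<Omega>" using d\<Psi> holomorphic_on_open[OF \<Omega>(1)] by blast
    fix w assume "w \<in> \<Omega>"
    have "deriv H (E w) + deriv G (E w) \<noteq> 0" using inv[OF \<open>w \<in> \<Omega>\<close>] by auto
    then have "E' w = 1 / (deriv H (E w) + deriv G (E w))"
      using inv[OF \<open>w \<in> \<Omega>\<close>] by (simp add: eq_divide_eq)
    then have "deriv \<Psi> w = (deriv H (E w) - deriv G (E w)) / (deriv H (E w) + deriv G (E w))"
      using DERIV_imp_deriv[OF d\<Psi>[OF \<open>w \<in> \<Omega>\<close>]] by simp
    then show "0 < Re (deriv \<Psi> w)"
      using Re_diff_div_add_pos sp[OF EB[OF \<open>w \<in> \<Omega>\<close>]] by simp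
  qed (use \<Omega> in auto)
  have "harm H G (E w) = 1 * vertical_shear \<Psi> w" if "w \<in> \<Omega>" for w
    using HG_E[OF that] by (simp add: harm_def vertical_shear_def \<Psi>_def complex_eq_iff)
  then show ?thesis
    by (rule inj_on_convex_image_transfer[OF _ onto one_neq_zero inj_on_vertical_shear
          convex_vertical_shear_image])
qed

lemma harm_rotation:
  fixes u :: complex and H G :: "complex \<Rightarrow> complex"
  assumes u: "norm u = 1"
    and holH: "H holomorphic_on ball 0 1" and holG: "G holomorphic_on ball 0 1"
  defines "h \<equiv> \<lambda>\<zeta>. u * H (cnj u * \<zeta>)" and "g \<equiv> \<lambda>\<zeta>. cnj u * G (cnj u * \<zeta>)"
  shows "h holomorphic_on ball 0 1" and "g holomorphic_on ball 0 1"
    and "\<And>\<zeta>. \<zeta> \<in> ball 0 1 \<Longrightarrow> deriv h \<zeta> = deriv H (cnj u * \<zeta>)"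
    and "\<And>\<zeta>. \<zeta> \<in> ball 0 1 \<Longrightarrow> deriv g \<zeta> = cnj u ^ 2 * deriv G (cnj u * \<zeta>)"
    and "inj_on (harm h g) (ball 0 1) \<and> convex (harm h g ` ball 0 1)
      \<Longrightarrow> inj_on (harm H G) (ball 0 1) \<and> convex (harm H G ` ball 0 1)"
proof -
  have uu: "cnj u * u = 1" using u by (simp add: complex_norm_square[symmetric] mult.commute)
  have cancel: "cnj u * (u * z) = z" for z using uu by (simp add: mult.assoc[symmetric])
  have rot: "cnj u * \<zeta> \<in> ball 0 1 \<longleftrightarrow> \<zeta> \<in> ball 0 1" for \<zeta> using u by (simp add: norm_mult)
  have d_rot: "((\<lambda>\<zeta>. F (cnj u * \<zeta>)) has_field_derivative deriv F (cnj u * \<zeta>) * cnj u) (at \<zeta>)"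
    if "F holomorphic_on ball 0 1" "\<zeta> \<in> ball 0 1" for F \<zeta>
    using holomorphic_derivI[OF that(1) open_ball, of "cnj u * \<zeta>"] rot that(2)
    by (auto intro!: DERIV_chain2[where f = F] derivative_eq_intros)
  have dh: "(h has_field_derivative deriv H (cnj u * \<zeta>)) (at \<zeta>)" if "\<zeta> \<in> ball 0 1" for \<zeta>
  proof -
    have "u * (deriv H (cnj u * \<zeta>) * cnj u) = deriv H (cnj u * \<zeta>)"
      using uu by (metis mult.commute mult.left_commute mult_1_right)
    from DERIV_cmult[OF d_rot[OF holH that], of u, unfolded this] show ?thesis unfolding h_def .
  qed
  have dg: "(g has_field_derivative cnj u ^ 2 * deriv G (cnj u * \<zeta>)) (at \<zeta>)" if "\<zeta> \<in> ball 0 1" for \<zeta>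
    using DERIV_cmult[OF d_rot[OF holG that], of "cnj u"] unfolding g_def
    by (simp add: power2_eq_square mult_ac)
  show "h holomorphic_on ball 0 1" "g holomorphic_on ball 0 1"
    using dh dg holomorphic_on_open[OF open_ball] by blast+
  show "deriv h \<zeta> = deriv H (cnj u * \<zeta>)" "deriv g \<zeta> = cnj u ^ 2 * deriv G (cnj u * \<zeta>)"
    if "\<zeta> \<in> ball 0 1" for \<zeta>
    using DERIV_imp_deriv[OF dh[OF that]] DERIV_imp_deriv[OF dg[OF that]] by auto
  assume "inj_on (harm h g) (ball 0 1) \<and> convex (harm h g ` ball 0 1)"
  moreover have "harm H G (cnj u * \<zeta>) = cnj u * harm h g \<zeta>" for \<zeta>
    by (simp add: harm_def h_def g_def distrib_left cancel)
  moreover have "(\<lambda>\<zeta>. cnj u * \<zeta>) ` ball 0 1 = ball 0 1"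
  proof
    show "ball 0 1 \<subseteq> (\<lambda>\<zeta>. cnj u * \<zeta>) ` ball 0 1"
    proof
      fix z :: complex assume "z \<in> ball 0 1"
      then show "z \<in> (\<lambda>\<zeta>. cnj u * \<zeta>) ` ball 0 1"
        using u cancel[of z] by (intro image_eqI[of _ _ "u * z"]) (auto simp: norm_mult)
    qed
  qed (use rot in auto)
  ultimately show "inj_on (harm H G) (ball 0 1) \<and> convex (harm H G ` ball 0 1)"
    using u by (intro inj_on_convex_image_transfer[where E = "\<lambda>\<zeta>. cnj u * \<zeta>"]) auto
qed

section \<open>The half-plane and strip cases\<close>

lemma norm_less_norm_diff_iff:
  fixes w :: complex and A :: real
  assumes "0 < A"
  shows "norm w < norm (of_real A - w) \<longleftrightarrow> Re w < A / 2"
proof -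
  have "norm w < norm (of_real A - w) \<longleftrightarrow> (norm w)\<^sup>2 < (norm (of_real A - w))\<^sup>2"
    by (meson norm_ge_zero power_less_imp_less_base power_strict_mono zero_less_numeral)
  also have "\<dots> \<longleftrightarrow> 0 < A * (A - 2 * Re w)"
    unfolding cmod_power2 by (simp add: power2_eq_square algebra_simps)
  also have "\<dots> \<longleftrightarrow> 0 < A - 2 * Re w" using assms by (simp add: zero_less_mult_iff)
  also have "\<dots> \<longleftrightarrow> Re w < A / 2" by linarith
  finally show ?thesis .
qed

lemma half_plane_Mobius_image:
  fixes A :: real
  assumes A: "0 < A"
  shows "(\<lambda>w. w / (of_real A - w)) ` {w. Re w < A / 2} = ball 0 1"
proof
  show "(\<lambda>w. w / (of_real A - w)) ` {w. Re w < A / 2} \<subseteq> ball 0 1"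
    using norm_less_norm_diff_iff[OF A] by (auto simp: norm_divide divide_less_eq)
  show "ball 0 1 \<subseteq> (\<lambda>w. w / (of_real A - w)) ` {w. Re w < A / 2}"
  proof
    fix \<zeta> :: complex assume "\<zeta> \<in> ball 0 1"
    then have "norm \<zeta> < 1" by simp
    then have "1 + \<zeta> \<noteq> 0" by (metis add_eq_0_iff norm_minus_cancel norm_one order_less_irrefl)
    define w where "w = of_real A * \<zeta> / (1 + \<zeta>)"
    have Aw: "of_real A - w = of_real A / (1 + \<zeta>)"
      using \<open>1 + \<zeta> \<noteq> 0\<close> by (simp add: w_def field_simps)
    have "norm w < norm (of_real A - w)"
      unfolding Aw using \<open>norm \<zeta> < 1\<close> A \<open>1 + \<zeta> \<noteq> 0\<close>
      by (simp add: w_def norm_divide norm_mult divide_strict_right_mono)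
    moreover have "w / (of_real A - w) = \<zeta>"
      unfolding Aw using A \<open>1 + \<zeta> \<noteq> 0\<close> by (simp add: w_def)
    ultimately show "\<zeta> \<in> (\<lambda>w. w / (of_real A - w)) ` {w. Re w < A / 2}"
      using norm_less_norm_diff_iff[OF A] by (auto intro!: image_eqI[of _ _ w])
  qed
qed

text \<open>For \<open>\<lambda> = 1\<close> the function \<open>H + G\<close> is \<open>A z / (1 + z)\<close>, which maps the disk onto the half-plane
  \<open>Re w < A / 2\<close>.\<close>
lemma univalent_convex_harm_half_plane:
  fixes H G :: "complex \<Rightarrow> complex" and A :: real
  assumes holH: "H holomorphic_on ball 0 1" and holG: "G holomorphic_on ball 0 1"
    and H0: "H 0 = 0" and G0: "G 0 = 0"
    and sp: "\<And>z. z \<in> ball 0 1 \<Longrightarrow> norm (deriv G z) < norm (deriv H z)"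
    and A: "0 < A"
    and eqn: "\<And>z. z \<in> ball 0 1 \<Longrightarrow> deriv H z + deriv G z = of_real A / (1 + z)\<^sup>2"
  shows "inj_on (harm H G) (ball 0 1) \<and> convex (harm H G ` ball 0 1)"
proof -
  define \<Omega> where "\<Omega> = {w. Re w < A / 2}"
  define E where "E w = w / (of_real A - w)" for w :: complex
  have onto: "E ` \<Omega> = ball 0 1"
    unfolding E_def \<Omega>_def by (rule half_plane_Mobius_image[OF A])
  have nz: "of_real A - w \<noteq> 0" if "w \<in> \<Omega>" for w
    using that A by (auto simp: \<Omega>_def complex_eq_iff)
  show ?thesis
  proof (rule univalent_convex_harm_via_shear[OF holH holG H0 G0 sp _ _ _ _ _ onto,
        where E' = "\<lambda>w. of_real A / (of_real A - w)\<^sup>2"])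
    show "open \<Omega>" unfolding \<Omega>_def by (rule open_halfspace_Re_lt)
    show "convex \<Omega>" unfolding \<Omega>_def by (rule convex_halfspace_Re_lt)
    show "Complex (Re w) s \<in> \<Omega>" if "w \<in> \<Omega>" for w s using that by (simp add: \<Omega>_def)
    show "0 \<in> \<Omega>" "E 0 = 0" using A by (simp_all add: \<Omega>_def E_def)
    fix w assume "w \<in> \<Omega>"
    show "(E has_field_derivative of_real A / (of_real A - w)\<^sup>2) (at w)"
      unfolding E_def using nz[OF \<open>w \<in> \<Omega>\<close>]
      by (auto intro!: derivative_eq_intros simp: field_simps power2_eq_square)
    have "E w \<in> ball 0 1" using onto \<open>w \<in> \<Omega>\<close> by blast
    then have "deriv H (E w) + deriv G (E w) = of_real A / (1 + E w)\<^sup>2" by (rule eqn)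
    also have "1 + E w = of_real A / (of_real A - w)"
      using nz[OF \<open>w \<in> \<Omega>\<close>] by (simp add: E_def field_simps)
    also have "of_real A / (of_real A / (of_real A - w))\<^sup>2 = (of_real A - w)\<^sup>2 / of_real A"
      using nz[OF \<open>w \<in> \<Omega>\<close>] A by (simp add: field_simps power2_eq_square)
    finally show "of_real A / (of_real A - w)\<^sup>2 * (deriv H (E w) + deriv G (E w)) = 1"
      using nz[OF \<open>w \<in> \<Omega>\<close>] A by simp
  qed
qed

lemma norm_polar_diff_cis_sq:
  fixes \<rho> \<eta> \<phi> :: real
  shows "(norm (of_real \<rho> * cis \<eta> - cis \<phi>))\<^sup>2 = \<rho>\<^sup>2 + 1 - 2 * \<rho> * cos (\<eta> - \<phi>)"
proof -
  have "(norm (of_real \<rho> * cis \<eta> - cis \<phi>))\<^sup>2 = (\<rho> * cos \<eta> - cos \<phi>)\<^sup>2 + (\<rho> * sin \<eta> - sin \<phi>)\<^sup>2"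
    unfolding cmod_power2 by simp
  also have "\<dots> = \<rho>\<^sup>2 * ((sin \<eta>)\<^sup>2 + (cos \<eta>)\<^sup>2) + ((sin \<phi>)\<^sup>2 + (cos \<phi>)\<^sup>2)
      - 2 * \<rho> * (cos \<eta> * cos \<phi> + sin \<eta> * sin \<phi>)"
    by (simp add: power2_eq_square algebra_simps del: sin_cos_squared_add sin_cos_squared_add2 sin_cos_squared_add3)
  finally show ?thesis by (simp only: sin_cos_squared_add cos_diff mult_1_right)
qed

lemma norm_diff_one_less_norm_diff_cis_iff:
  fixes \<rho> \<eta> \<theta> :: real
  assumes \<rho>: "0 < \<rho>" and \<theta>: "0 < sin \<theta>"
  shows "norm (of_real \<rho> * cis \<eta> - 1) < norm (of_real \<rho> * cis \<eta> - cis (2 * \<theta>))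
    \<longleftrightarrow> sin (\<eta> - \<theta>) < 0"
proof -
  have "norm (of_real \<rho> * cis \<eta> - 1) < norm (of_real \<rho> * cis \<eta> - cis (2 * \<theta>))
      \<longleftrightarrow> (norm (of_real \<rho> * cis \<eta> - cis 0))\<^sup>2 < (norm (of_real \<rho> * cis \<eta> - cis (2 * \<theta>)))\<^sup>2"
    unfolding cis_zero by (meson norm_ge_zero power_less_imp_less_base power_strict_mono zero_less_numeral)
  also have "\<dots> \<longleftrightarrow> 0 < \<rho> * (cos \<eta> - cos (\<eta> - 2 * \<theta>))"
    unfolding norm_polar_diff_cis_sq by (simp add: algebra_simps)
  also have "cos \<eta> - cos (\<eta> - 2 * \<theta>) = - (2 * sin (\<eta> - \<theta>) * sin \<theta>)"
  proof -
    have "cos \<eta> - cos (\<eta> - 2 * \<theta>)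
        = 2 * sin ((\<eta> + (\<eta> - 2 * \<theta>)) / 2) * sin ((\<eta> - 2 * \<theta> - \<eta>) / 2)"
      by (rule cos_diff_cos)
    also have "(\<eta> + (\<eta> - 2 * \<theta>)) / 2 = \<eta> - \<theta>" by simp
    also have "(\<eta> - 2 * \<theta> - \<eta>) / 2 = - \<theta>" by simp
    finally show ?thesis by simp
  qed
  also have "0 < \<rho> * - (2 * sin (\<eta> - \<theta>) * sin \<theta>) \<longleftrightarrow> sin (\<eta> - \<theta>) < 0"
    using \<rho> \<theta> by (simp add: zero_less_mult_iff mult_less_0_iff)
  finally show ?thesis .
qed

lemma exp_Mobius_strip_bound:
  fixes \<theta> :: real and \<omega> :: complex
  assumes \<theta>: "0 < \<theta>" "\<theta> < pi" and \<omega>: "\<theta> - pi < Im \<omega>" "Im \<omega> < \<theta>"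
  shows "norm (exp \<omega> - 1) < norm (cis \<theta> - cis (- \<theta>) * exp \<omega>)"
proof -
  have "sin (Im \<omega> - \<theta>) < 0" using sin_gt_zero[of "\<theta> - Im \<omega>"] \<omega> by (simp add: sin_diff mult.commute)
  then have "norm (exp \<omega> - 1) < norm (exp \<omega> - cis (2 * \<theta>))"
    using norm_diff_one_less_norm_diff_cis_iff[of "exp (Re \<omega>)" \<theta> "Im \<omega>"] sin_gt_zero[OF \<theta>]
    by (simp add: exp_eq_polar)
  also have "cis \<theta> - cis (- \<theta>) * exp \<omega> = cis (- \<theta>) * (cis (2 * \<theta>) - exp \<omega>)"
    by (simp add: algebra_simps cis_mult)
  then have "norm (exp \<omega> - cis (2 * \<theta>)) = norm (cis \<theta> - cis (- \<theta>) * exp \<omega>)"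
    by (simp add: norm_mult norm_minus_commute)
  finally show ?thesis .
qed

lemma exp_Mobius_factors:
  fixes \<theta> :: real and \<omega> :: complex
  assumes D: "cis \<theta> - cis (- \<theta>) * exp \<omega> \<noteq> 0"
  defines "Q \<equiv> (exp \<omega> - 1) / (cis \<theta> - cis (- \<theta>) * exp \<omega>)"
  shows "1 + cis \<theta> * Q = exp \<omega> * (cis \<theta> - cis (- \<theta>)) / (cis \<theta> - cis (- \<theta>) * exp \<omega>)"
    and "1 + cis (- \<theta>) * Q = (cis \<theta> - cis (- \<theta>)) / (cis \<theta> - cis (- \<theta>) * exp \<omega>)"
proof -
  have "cis \<theta> * cis (- \<theta>) = 1" by (simp add: cis_mult)
  then show "1 + cis \<theta> * Q = exp \<omega> * (cis \<theta> - cis (- \<theta>)) / (cis \<theta> - cis (- \<theta>) * exp \<omega>)"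
    and "1 + cis (- \<theta>) * Q = (cis \<theta> - cis (- \<theta>)) / (cis \<theta> - cis (- \<theta>) * exp \<omega>)"
    using D by (simp_all add: Q_def field_simps)
qed

lemma exp_Mobius_strip_surj:
  fixes \<theta> :: real and \<zeta> :: complex
  assumes \<theta>: "0 < \<theta>" "\<theta> < pi" and \<zeta>: "norm \<zeta> < 1"
  obtains \<omega> where "\<theta> - pi < Im \<omega>" "Im \<omega> < \<theta>"
    and "(exp \<omega> - 1) / (cis \<theta> - cis (- \<theta>) * exp \<omega>) = \<zeta>"
proof -
  have nz: "1 + c * \<zeta> \<noteq> 0" if "norm c = 1" for c
  proof
    assume "1 + c * \<zeta> = 0"
    then have "norm (c * \<zeta>) = 1" by (metis add_eq_0_iff2 norm_minus_cancel norm_one)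
    then show False using \<zeta> that by (simp add: norm_mult)
  qed
  define L where "L = cis \<theta> - cis (- \<theta>)"
  define N where "N = 1 + cis (- \<theta>) * \<zeta>"
  define M where "M = (1 + cis \<theta> * \<zeta>) / N"
  have N: "N \<noteq> 0" unfolding N_def by (rule nz) simp
  have L0: "L \<noteq> 0" using sin_gt_zero[OF \<theta>] by (simp add: L_def complex_eq_iff)
  have M0: "M \<noteq> 0" using nz[of "cis \<theta>"] N by (simp add: M_def)
  have cc: "cis \<theta> * (cis (- \<theta>) * z) = z" for z by (simp add: cis_mult mult.assoc[symmetric])
  have M1: "M - 1 = L * \<zeta> / N"
    using N by (simp add: M_def N_def L_def field_simps)
  have M2: "cis \<theta> - cis (- \<theta>) * M = L / N"
    using N cc by (simp add: M_def N_def L_def field_simps)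
  have "M - cis (2 * \<theta>) = M - cis \<theta> * cis \<theta>" by (simp add: cis_mult)
  also have "\<dots> = - cis \<theta> * (cis \<theta> - cis (- \<theta>) * M)" by (simp add: algebra_simps cc cis_mult)
  finally have "norm (M - cis (2 * \<theta>)) = norm (L / N)" by (simp add: M2 norm_mult norm_divide)
  moreover have "norm (M - 1) < norm (L / N)"
    unfolding M1 using \<zeta> L0 N by (simp add: norm_mult norm_divide divide_strict_right_mono)
  ultimately have "norm (M - 1) < norm (M - cis (2 * \<theta>))" by simp
  then have "sin (Arg M - \<theta>) < 0"
    using norm_diff_one_less_norm_diff_cis_iff[of "norm M" \<theta> "Arg M"] rcis_cmod_Arg[of M]
      M0 sin_gt_zero[OF \<theta>]
    by (simp add: rcis_def)
  moreover have "- 2 * pi < Arg M - \<theta>" "Arg M - \<theta> < pi" using Arg_bounded[of M] \<theta> by auto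
  ultimately have "\<theta> - pi < Arg M" "Arg M < \<theta>"
    using sin_ge_zero[of "Arg M - \<theta>"] sin_ge_zero[of "Arg M - \<theta> + 2 * pi"]
      sin_periodic[of "Arg M - \<theta>"]
    by linarith+
  moreover have "(exp (Ln M) - 1) / (cis \<theta> - cis (- \<theta>) * exp (Ln M)) = \<zeta>"
    using M0 L0 N by (simp add: M1 M2)
  ultimately show ?thesis using M0 by (intro that[of "Ln M"]) (simp_all add: Ln_Arg)
qed

lemma exp_Mobius_strip_image:
  fixes \<theta> :: real
  assumes \<theta>: "0 < \<theta>" "\<theta> < pi"
  shows "(\<lambda>\<omega>. (exp \<omega> - 1) / (cis \<theta> - cis (- \<theta>) * exp \<omega>)) ` {\<omega>. \<theta> - pi < Im \<omega> \<and> Im \<omega> < \<theta>}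
    = ball 0 1"
proof
  show "(\<lambda>\<omega>. (exp \<omega> - 1) / (cis \<theta> - cis (- \<theta>) * exp \<omega>)) ` {\<omega>. \<theta> - pi < Im \<omega> \<and> Im \<omega> < \<theta>}
      \<subseteq> ball 0 1"
    using exp_Mobius_strip_bound[OF \<theta>] by (auto simp: norm_divide divide_less_eq)
  show "ball 0 1 \<subseteq> (\<lambda>\<omega>. (exp \<omega> - 1) / (cis \<theta> - cis (- \<theta>) * exp \<omega>)) `
      {\<omega>. \<theta> - pi < Im \<omega> \<and> Im \<omega> < \<theta>}"
  proof
    fix \<zeta> :: complex assume "\<zeta> \<in> ball 0 1"
    then obtain \<omega> where "\<theta> - pi < Im \<omega>" "Im \<omega> < \<theta>"
      and "(exp \<omega> - 1) / (cis \<theta> - cis (- \<theta>) * exp \<omega>) = \<zeta>"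
      using exp_Mobius_strip_surj[OF \<theta>] by auto
    then show "\<zeta> \<in> (\<lambda>\<omega>. (exp \<omega> - 1) / (cis \<theta> - cis (- \<theta>) * exp \<omega>)) `
        {\<omega>. \<theta> - pi < Im \<omega> \<and> Im \<omega> < \<theta>}"
      by (auto intro!: image_eqI[of _ _ \<omega>])
  qed
qed

lemma exp_Mobius_vertical_strip_image:
  fixes \<theta> k :: real
  assumes \<theta>: "0 < \<theta>" "\<theta> < pi" and k: "0 < k"
  shows "(\<lambda>w. (exp (\<i> * of_real k * w) - 1) / (cis \<theta> - cis (- \<theta>) * exp (\<i> * of_real k * w)))
      ` ({w. (\<theta> - pi) / k < Re w} \<inter> {w. Re w < \<theta> / k}) = ball 0 1"
proof -
  define S where "S = {\<omega>. \<theta> - pi < Im \<omega> \<and> Im \<omega> < \<theta>}"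
  have scaled: "(\<lambda>w. \<i> * of_real k * w) ` ({w. (\<theta> - pi) / k < Re w} \<inter> {w. Re w < \<theta> / k}) = S"
  proof (intro equalityI subsetI)
    fix \<omega> assume "\<omega> \<in> S"
    moreover have "\<omega> = \<i> * of_real k * Complex (Im \<omega> / k) (- Re \<omega> / k)"
      using k by (simp add: complex_eq_iff)
    ultimately show "\<omega> \<in> (\<lambda>w. \<i> * of_real k * w) ` ({w. (\<theta> - pi) / k < Re w} \<inter> {w. Re w < \<theta> / k})"
      using k by (intro image_eqI) (auto simp: S_def divide_strict_right_mono)
  qed (use k in \<open>auto simp: S_def field_simps\<close>)
  have "(\<lambda>w. (exp (\<i> * of_real k * w) - 1) / (cis \<theta> - cis (- \<theta>) * exp (\<i> * of_real k * w)))
      ` ({w. (\<theta> - pi) / k < Re w} \<inter> {w. Re w < \<theta> / k})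
    = (\<lambda>\<omega>. (exp \<omega> - 1) / (cis \<theta> - cis (- \<theta>) * exp \<omega>))
      ` (\<lambda>w. \<i> * of_real k * w) ` ({w. (\<theta> - pi) / k < Re w} \<inter> {w. Re w < \<theta> / k})"
    by (simp add: image_image)
  also have "\<dots> = ball 0 1"
    unfolding scaled S_def by (rule exp_Mobius_strip_image[OF \<theta>])
  finally show ?thesis .
qed

text \<open>For \<open>\<lambda> = cis \<theta>\<close> with \<open>0 < \<theta> < pi\<close>, the function \<open>H + G\<close> maps the disk onto the vertical strip
  \<open>(\<theta> - pi) / k < Re w < \<theta> / k\<close> with \<open>k = 2 sin \<theta> / A\<close>; its inverse is \<open>exp (\<i> k w)\<close> followed
  by a Moebius transformation.\<close>
lemma univalent_convex_harm_strip:
  fixes H G :: "complex \<Rightarrow> complex" and A \<theta> :: real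
  assumes holH: "H holomorphic_on ball 0 1" and holG: "G holomorphic_on ball 0 1"
    and H0: "H 0 = 0" and G0: "G 0 = 0"
    and sp: "\<And>z. z \<in> ball 0 1 \<Longrightarrow> norm (deriv G z) < norm (deriv H z)"
    and A: "0 < A" and \<theta>: "0 < \<theta>" "\<theta> < pi"
    and eqn: "\<And>z. z \<in> ball 0 1 \<Longrightarrow>
      deriv H z + deriv G z = of_real A / ((1 + cis \<theta> * z) * (1 + cis (- \<theta>) * z))"
  shows "inj_on (harm H G) (ball 0 1) \<and> convex (harm H G ` ball 0 1)"
proof -
  define k where "k = 2 * sin \<theta> / A"
  have k: "0 < k" using sin_gt_zero[OF \<theta>] A by (simp add: k_def)
  define L where "L = cis \<theta> - cis (- \<theta>)"
  have L: "L = \<i> * of_real k * of_real A" using A by (simp add: L_def k_def complex_eq_iff)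
  define D where "D \<omega> = cis \<theta> - cis (- \<theta>) * exp \<omega>" for \<omega>
  define S where "S = {\<omega>. \<theta> - pi < Im \<omega> \<and> Im \<omega> < \<theta>}"
  define \<Omega> where "\<Omega> = {w. (\<theta> - pi) / k < Re w} \<inter> {w. Re w < \<theta> / k}"
  define E where "E w = (exp (\<i> * of_real k * w) - 1) / D (\<i> * of_real k * w)" for w
  define E' where "E' w = \<i> * of_real k * (exp (\<i> * of_real k * w) * L / (D (\<i> * of_real k * w))\<^sup>2)" for w
  have S: "\<i> * of_real k * w \<in> S \<longleftrightarrow> w \<in> \<Omega>" for w
    using k by (simp add: S_def \<Omega>_def field_simps)
  have D: "D \<omega> \<noteq> 0" if "\<omega> \<in> S" for \<omega>
    using exp_Mobius_strip_bound[OF \<theta>, of \<omega>] that by (auto simp: S_def D_def)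
  have onto: "E ` \<Omega> = ball 0 1"
    unfolding E_def D_def \<Omega>_def by (rule exp_Mobius_vertical_strip_image[OF \<theta> k])
  show ?thesis
  proof (rule univalent_convex_harm_via_shear[OF holH holG H0 G0 sp _ _ _ _ _ onto, where E' = E'])
    show "open \<Omega>" unfolding \<Omega>_def by (intro open_Int open_halfspace_Re_gt open_halfspace_Re_lt)
    show "convex \<Omega>" unfolding \<Omega>_def by (intro convex_Int convex_halfspace_Re_gt convex_halfspace_Re_lt)
    show "Complex (Re w) s \<in> \<Omega>" if "w \<in> \<Omega>" for w s using that by (simp add: \<Omega>_def)
    show "0 \<in> \<Omega>" using \<theta> k by (simp add: \<Omega>_def divide_neg_pos)
    show "E 0 = 0" by (simp add: E_def)
    fix w assume "w \<in> \<Omega>"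
    define \<omega> where "\<omega> = \<i> * of_real k * w"
    have D\<omega>: "D \<omega> \<noteq> 0" using D S \<open>w \<in> \<Omega>\<close> by (simp add: \<omega>_def)
    show "(E has_field_derivative E' w) (at w)"
    proof -
      have "(E has_field_derivative \<i> * of_real k * ((exp \<omega> * D \<omega> + (exp \<omega> - 1) * (cis (- \<theta>) * exp \<omega>))
          / (D \<omega> * D \<omega>))) (at w)"
        unfolding E_def D_def using D\<omega> unfolding \<omega>_def D_def
        by (auto intro!: derivative_eq_intros simp: algebra_simps)
      moreover have "(exp \<omega> * D \<omega> + (exp \<omega> - 1) * (cis (- \<theta>) * exp \<omega>)) = exp \<omega> * L"
        by (simp add: D_def L_def algebra_simps)
      ultimately show ?thesis by (simp add: E'_def \<omega>_def power2_eq_square)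
    qed
    have "1 + cis \<theta> * E w = exp \<omega> * L / D \<omega>" "1 + cis (- \<theta>) * E w = L / D \<omega>"
      using exp_Mobius_factors[OF D\<omega>[unfolded D_def]] by (simp_all add: E_def D_def L_def \<omega>_def)
    moreover have "E w \<in> ball 0 1" using onto \<open>w \<in> \<Omega>\<close> by blast
    ultimately have "deriv H (E w) + deriv G (E w) = of_real A / (exp \<omega> * L / D \<omega> * (L / D \<omega>))"
      using eqn by simp
    then show "E' w * (deriv H (E w) + deriv G (E w)) = 1"
      using D\<omega> k A unfolding E'_def \<omega>_def[symmetric] L by (simp add: field_simps power2_eq_square)
  qed
qed

section \<open>Reduction to the normalized equation\<close>

lemma univalent_convex_harm_normalized:
  fixes H G :: "complex \<Rightarrow> complex" and lam :: complex and A :: real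
  assumes holH: "H holomorphic_on ball 0 1" and holG: "G holomorphic_on ball 0 1"
    and H0: "H 0 = 0" and G0: "G 0 = 0"
    and sp: "\<And>z. z \<in> ball 0 1 \<Longrightarrow> norm (deriv G z) < norm (deriv H z)"
    and lam: "norm lam = 1" "lam \<noteq> -1" and A: "0 < A"
    and eqn: "\<And>z. z \<in> ball 0 1 \<Longrightarrow>
      deriv H z + deriv G z = of_real A / ((1 + lam * z) * (1 + cnj lam * z))"
  shows "inj_on (harm H G) (ball 0 1) \<and> convex (harm H G ` ball 0 1)"
proof -
  have polar: "c = cis (Arg c)" if "norm c = 1" for c
    using rcis_cmod_Arg[of c] that by (simp add: rcis_def)
  consider "lam = 1" | "0 < Im lam" | "0 < Im (cnj lam)"
  proof -
    have "lam = 1" if "Im lam = 0"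
      using lam that unfolding cmod_def by (auto simp: complex_eq_iff abs_if split: if_splits)
    then show ?thesis using that by force
  qed
  then show ?thesis
  proof cases
    case 1
    have "deriv H z + deriv G z = of_real A / (1 + z)\<^sup>2" if "z \<in> ball 0 1" for z
      using eqn[OF that] 1 by (simp add: power2_eq_square)
    from univalent_convex_harm_half_plane[OF holH holG H0 G0 sp A this] show ?thesis .
  next
    case 2
    define \<theta> where "\<theta> = Arg lam"
    have \<theta>: "0 < \<theta>" "\<theta> < pi" using 2 Arg_lt_pi unfolding \<theta>_def by blast+
    have lam_eq: "lam = cis \<theta>" unfolding \<theta>_def by (rule polar[OF lam(1)])
    have "deriv H z + deriv G z = of_real A / ((1 + cis \<theta> * z) * (1 + cis (- \<theta>) * z))"
      if "z \<in> ball 0 1" for z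
      using eqn[OF that] by (simp only: lam_eq cis_cnj)
    from univalent_convex_harm_strip[OF holH holG H0 G0 sp A \<theta> this] show ?thesis .
  next
    case 3
    define \<theta> where "\<theta> = Arg (cnj lam)"
    have \<theta>: "0 < \<theta>" "\<theta> < pi" using 3 Arg_lt_pi unfolding \<theta>_def by blast+
    have "cnj lam = cis \<theta>" unfolding \<theta>_def by (rule polar) (simp add: lam(1))
    then have lam_eq: "lam = cis (- \<theta>)" by (metis cis_cnj complex_cnj_cnj)
    have "deriv H z + deriv G z = of_real A / ((1 + cis \<theta> * z) * (1 + cis (- \<theta>) * z))"
      if "z \<in> ball 0 1" for z
      using eqn[OF that] by (simp add: lam_eq cis_cnj mult.commute)
    from univalent_convex_harm_strip[OF holH holG H0 G0 sp A \<theta> this] show ?thesis .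
  qed
qed

lemma univalent_convex_harm_of_deriv_equation:
  fixes H G :: "complex \<Rightarrow> complex" and u lam :: complex and A :: real
  assumes u: "norm u = 1" and lam: "norm lam = 1" and A: "0 < A"
    and holH: "H holomorphic_on ball 0 1" and holG: "G holomorphic_on ball 0 1"
    and H0: "H 0 = 0" and G0: "G 0 = 0"
    and sp: "\<And>z. z \<in> ball 0 1 \<Longrightarrow> norm (deriv G z) < norm (deriv H z)"
    and eqn: "\<And>z. z \<in> ball 0 1 \<Longrightarrow> deriv H z + cnj u ^ 2 * deriv G z
      = of_real A / ((1 + lam * u * z) * (1 + cnj lam * u * z))"
  shows "inj_on (harm H G) (ball 0 1) \<and> convex (harm H G ` ball 0 1)"
proof -
  txt \<open>The equation is unchanged under \<open>(u, \<lambda>) \<mapsto> (-u, -\<lambda>)\<close>, which disposes of \<open>\<lambda> = -1\<close>.\<close>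
  obtain v \<mu> where v: "norm v = 1" and \<mu>: "norm \<mu> = 1" "\<mu> \<noteq> -1"
    and eqn': "\<And>z. z \<in> ball 0 1 \<Longrightarrow> deriv H z + cnj v ^ 2 * deriv G z
      = of_real A / ((1 + \<mu> * v * z) * (1 + cnj \<mu> * v * z))"
  proof (cases "lam = -1")
    case True
    then show ?thesis using u eqn by (intro that[of "- u" 1]) auto
  qed (use u lam eqn in blast)
  have vv: "v * (cnj v * z) = z" for z
    using v by (simp add: mult.assoc[symmetric] complex_norm_square[symmetric])
  have rot: "cnj v * z \<in> ball 0 1" if "z \<in> ball 0 1" for z using v that by (simp add: norm_mult)
  note rotation = harm_rotation[OF v holH holG]
  show ?thesis
  proof (rule rotation(5), rule univalent_convex_harm_normalized[OF rotation(1,2) _ _ _ \<mu> A])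
    show "v * H (cnj v * 0) = 0" "cnj v * G (cnj v * 0) = 0" by (simp_all add: H0 G0)
    fix z :: complex assume z: "z \<in> ball 0 1"
    show "norm (deriv (\<lambda>\<zeta>. cnj v * G (cnj v * \<zeta>)) z) < norm (deriv (\<lambda>\<zeta>. v * H (cnj v * \<zeta>)) z)"
      using sp[OF rot[OF z]] v by (simp add: rotation(3,4)[OF z] norm_mult norm_power)
    show "deriv (\<lambda>\<zeta>. v * H (cnj v * \<zeta>)) z + deriv (\<lambda>\<zeta>. cnj v * G (cnj v * \<zeta>)) z
        = of_real A / ((1 + \<mu> * z) * (1 + cnj \<mu> * z))"
      using eqn'[OF rot[OF z]] by (simp add: rotation(3,4)[OF z] mult.assoc vv)
  qed
qed

theorem theorem3:
  fixes a lam \<delta> :: complex and H G :: "complex \<Rightarrow> complex"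
  assumes "norm lam = 1" and "norm \<delta> = 1" and "norm a < 1"
    and "family_F a lam \<delta> H G"
    and "locally_univalent_sense_preserving H G"
  shows "inj_on (harm H G) (ball 0 1) \<and> convex (harm H G ` ball 0 1)"
proof -
  define \<gamma> where "\<gamma> = Arg (1 + cnj a)"
  define u where "u = \<delta> * exp (\<i> * of_real \<gamma>)"
  have u: "norm u = 1" using assms(2) by (simp add: u_def norm_mult)
  have "1 + a \<noteq> 0" using assms(3) by (metis add_eq_0_iff2 norm_minus_cancel norm_one order_less_irrefl)
  then have A: "0 < norm (1 + a)" by simp
  have "cnj u ^ 2 = cnj (\<delta>\<^sup>2) * exp (- 2 * \<i> * of_real \<gamma>)"
    by (simp add: u_def exp_cnj power_mult_distrib mult.assoc flip: exp_of_nat_mult)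
  then have eqn: "deriv H z + cnj u ^ 2 * deriv G z
      = of_real (norm (1 + a)) / ((1 + lam * u * z) * (1 + cnj lam * u * z))" if "z \<in> ball 0 1" for z
    using assms(4) that unfolding family_F_def Let_def \<gamma>_def[symmetric] by (simp add: u_def mult.assoc)
  show ?thesis
    using assms(4,5) unfolding family_F_def in_class_H_def locally_univalent_sense_preserving_def
    by (intro univalent_convex_harm_of_deriv_equation[OF u assms(1) A _ _ _ _ _ eqn]) auto
qed

end
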